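(* Let $p\ge 3$ be a prime. Then there exists a set of $p-1$ mutually orthogonal binary frequency squares of order $2p$.
   Context: A binary frequency square of order $n$ (with $n$ even) is an $n\times n$ array with entries in $\{0,1\}$ such that each of $0$ and $1$ appears exactly $n/2$ times in each row and in each column. Two such squares are orthogonal if, when superimposed, each of the four ordered pairs $(0,0),(0,1),(1,0),(1,1)$ appears the same number of times (namely $n^2/4$). A set of frequency squares is mutually orthogonal if every pair of distinct members is orthogonal. *)

theory Defs
  imports Main "HOL-Computational_Algebra.Primes"
begin

text \<open>An n x n array is modelled as a function nat => nat => nat, of which only
  the entries L i j with i, j < n matter.\<close>

definition binary_freq_square :: "nat \<Rightarrow> (nat \<Rightarrow> nat \<Rightarrow> nat) \<Rightarrow> bool" where
  "binary_freq_square n L \<longleftrightarrow> even n \<and>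
     (\<forall>i<n. \<forall>j<n. L i j \<in> {0, 1}) \<and>
     (\<forall>i<n. \<forall>s\<in>{0::nat, 1}. card {j. j < n \<and> L i j = s} = n div 2) \<and>
     (\<forall>j<n. \<forall>s\<in>{0::nat, 1}. card {i. i < n \<and> L i j = s} = n div 2)"

definition orthogonal_squares :: "nat \<Rightarrow> (nat \<Rightarrow> nat \<Rightarrow> nat) \<Rightarrow> (nat \<Rightarrow> nat \<Rightarrow> nat) \<Rightarrow> bool" where
  "orthogonal_squares n L M \<longleftrightarrow>
     (\<forall>a\<in>{0::nat, 1}. \<forall>b\<in>{0::nat, 1}.
        card {(i, j). i < n \<and> j < n \<and> L i j = a \<and> M i j = b} = n\<^sup>2 div 4)"

definition MOFS_binary :: "nat \<Rightarrow> nat \<Rightarrow> (nat \<Rightarrow> nat \<Rightarrow> nat \<Rightarrow> nat) \<Rightarrow> bool" where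
  "MOFS_binary n k F \<longleftrightarrow>
     (\<forall>r<k. binary_freq_square n (F r)) \<and>
     (\<forall>r<k. \<forall>s<k. r \<noteq> s \<longrightarrow>
        (\<exists>i<n. \<exists>j<n. F r i j \<noteq> F s i j) \<and> orthogonal_squares n (F r) (F s))"

end

theory Submission
  imports Defs "HOL-Number_Theory.Cong"
begin

text \<open>Index rows and columns of the arrays of order 2p by the group G = Z_2 x Z_p and let
  S \<subseteq> G consist of the elements (0, x) with 0 \<le> x \<le> (p - 1)/2 and (1, x) with
  1 \<le> x \<le> (p - 1)/2, so that |S| = p. For a permutation \<pi> of G, the array
  L(g, h) = [\<pi> g + h \<in> S] has exactly p ones in every row and column. Superimposing the arrays
  for \<pi> and \<pi>', the number of cells showing (1, 1) is the sum over g of the autocorrelation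
  \<rho>(\<pi>' g - \<pi> g) of S, while the sum of \<rho> over all of G is |S|^2 = p^2.

  The autocorrelation of this particular S satisfies \<rho>(1, d) = \<rho>(0, d) for d \<noteq> 0. The
  permutations \<pi>_k (a, x) = (a + t, y) with y = k (x + a k), k = 1, ..., p - 1, where the bit t
  is set iff the root m of k m + y = 0 in Z_p exceeds k, are chosen such that on each coset
  {a} x Z_p the second coordinate (l - k)(x + a (l + k)) of \<pi>_l - \<pi>_k runs through Z_p, and at
  its zero both permutations have second coordinate -akl, so that \<pi>_l - \<pi>_k takes the value
  (a, 0). Hence the sum of \<rho>(\<pi>_l g - \<pi>_k g) equals the sum of \<rho> over G, i.e. p^2, and the
  row and column counts then force each of the four pairs to appear p^2 times.\<close>

section \<open>Criteria for binary frequency squares\<close>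

lemma card_level_sets_01:
  fixes f :: "'a \<Rightarrow> nat"
  assumes "finite A" "\<And>x. f x \<in> {0, 1}"
  shows "card {x\<in>A. f x = 1} = (\<Sum>x\<in>A. f x)"
    and "card {x\<in>A. f x = 0} + (\<Sum>x\<in>A. f x) = card A"
proof -
  have "(\<Sum>x\<in>A. f x) = (\<Sum>x\<in>A. of_bool (f x = 1))"
    using assms(2) by (intro sum.cong) auto
  also have "\<dots> = card {x\<in>A. f x = 1}"
    using assms(1) by (simp add: Int_def)
  finally show one: "card {x\<in>A. f x = 1} = (\<Sum>x\<in>A. f x)" ..
  have "card ({x\<in>A. f x = 0} \<union> {x\<in>A. f x = 1}) = card {x\<in>A. f x = 0} + card {x\<in>A. f x = 1}"
    by (rule card_Un_disjoint) (use assms(1) in auto)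
  moreover have "{x\<in>A. f x = 0} \<union> {x\<in>A. f x = 1} = A"
    using assms(2) by auto
  ultimately show "card {x\<in>A. f x = 0} + (\<Sum>x\<in>A. f x) = card A"
    using one by simp
qed

lemma binary_freq_squareI:
  assumes "even n" and bin: "\<And>i j. L i j \<in> {0, 1}"
    and rows: "\<And>i. i < n \<Longrightarrow> (\<Sum>j<n. L i j) = n div 2"
    and cols: "\<And>j. j < n \<Longrightarrow> (\<Sum>i<n. L i j) = n div 2"
  shows "binary_freq_square n L"
proof -
  have half: "card {x\<in>{..<n}. f x = s} = n div 2"
    if "\<And>x. f x \<in> {0, 1}" "(\<Sum>x<n. f x) = n div 2" "s \<in> {0, 1}" for f :: "nat \<Rightarrow> nat" and s
  proof -
    have "card {x\<in>{..<n}. f x = 1} = n div 2" "card {x\<in>{..<n}. f x = 0} + n div 2 = n"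
      using card_level_sets_01[of "{..<n}" f] that(1,2) by simp_all
    then show ?thesis
      using that(3) \<open>even n\<close> by auto
  qed
  have set_eq: "{x. x < n \<and> P x} = {x\<in>{..<n}. P x}" for P
    by auto
  have row_card: "card {j. j < n \<and> L i j = s} = n div 2" if "i < n" "s \<in> {0, 1}" for i s
    unfolding set_eq using half[of "L i" s] bin rows that by blast
  have col_card: "card {i. i < n \<and> L i j = s} = n div 2" if "j < n" "s \<in> {0, 1}" for j s
    unfolding set_eq using half[of "\<lambda>i. L i j" s] bin cols that by blast
  show ?thesis
    unfolding binary_freq_square_def
    by (intro conjI allI impI ballI bin) (simp_all add: \<open>even n\<close> row_card col_card)
qed

lemma orthogonal_squaresI:
  fixes L M :: "nat \<Rightarrow> nat \<Rightarrow> nat"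
  assumes bin: "\<And>i j. L i j \<in> {0, 1}" "\<And>i j. M i j \<in> {0, 1}"
    and n: "n * n = 4 * q"
    and sum_L: "(\<Sum>i<n. \<Sum>j<n. L i j) = 2 * q"
    and sum_M: "(\<Sum>i<n. \<Sum>j<n. M i j) = 2 * q"
    and sum_LM: "(\<Sum>i<n. \<Sum>j<n. L i j * M i j) = q"
  shows "orthogonal_squares n L M"
proof -
  define N where "N a b = (\<Sum>i<n. \<Sum>j<n. of_bool (L i j = a \<and> M i j = b) :: nat)" for a b
  have card_N: "card {(i, j). i < n \<and> j < n \<and> L i j = a \<and> M i j = b} = N a b" for a b
  proof -
    let ?P = "\<lambda>x. L (fst x) (snd x) = a \<and> M (fst x) (snd x) = b"
    have "N a b = (\<Sum>x\<in>{..<n} \<times> {..<n}. of_bool (?P x))"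
      by (simp only: N_def sum.cartesian_product case_prod_unfold)
    also have "\<dots> = card ({..<n} \<times> {..<n} \<inter> {x. ?P x})"
      by simp
    also have "{..<n} \<times> {..<n} \<inter> {x. ?P x} = {(i, j). i < n \<and> j < n \<and> L i j = a \<and> M i j = b}"
      by auto
    finally show ?thesis ..
  qed
  have sum2_add: "(\<Sum>i<n. \<Sum>j<n. f i j + g i j) = (\<Sum>i<n. \<Sum>j<n. f i j) + (\<Sum>i<n. \<Sum>j<n. g i j)"
    for f g :: "nat \<Rightarrow> nat \<Rightarrow> nat"
    by (simp add: sum.distrib)
  have "N 1 1 = q"
  proof -
    have "of_bool (L i j = 1 \<and> M i j = 1) = L i j * M i j" for i j
      using bin[of i j] by auto
    then show ?thesis
      using sum_LM by (simp add: N_def)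
  qed
  moreover have "N 1 0 + q = 2 * q"
  proof -
    have "of_bool (L i j = 1 \<and> M i j = 0) + L i j * M i j = L i j" for i j
      using bin[of i j] by auto
    then show ?thesis
      using sum2_add[of "\<lambda>i j. of_bool (L i j = 1 \<and> M i j = 0)" "\<lambda>i j. L i j * M i j"]
      by (simp add: N_def sum_LM sum_L)
  qed
  moreover have "N 0 1 + q = 2 * q"
  proof -
    have "of_bool (L i j = 0 \<and> M i j = 1) + L i j * M i j = M i j" for i j
      using bin[of i j] by auto
    then show ?thesis
      using sum2_add[of "\<lambda>i j. of_bool (L i j = 0 \<and> M i j = 1)" "\<lambda>i j. L i j * M i j"]
      by (simp add: N_def sum_LM sum_M)
  qed
  moreover have "N 0 0 + 2 * q + 2 * q = n * n + q"
  proof -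
    have "of_bool (L i j = 0 \<and> M i j = 0) + L i j + M i j = 1 + L i j * M i j" for i j
      using bin(1)[of i j] bin(2)[of i j] by auto
    then have "(\<Sum>i<n. \<Sum>j<n. of_bool (L i j = 0 \<and> M i j = 0) + L i j + M i j) = n * n + q"
      using sum2_add[of "\<lambda>i j. 1" "\<lambda>i j. L i j * M i j"] by (simp add: sum_LM)
    then show ?thesis
      by (simp add: N_def sum.distrib sum_L sum_M)
  qed
  ultimately have "N a b = q" if "a \<in> {0, 1}" "b \<in> {0, 1}" for a b
    using that n by auto
  moreover have "n\<^sup>2 div 4 = q"
    using n by (simp add: power2_eq_square)
  ultimately show ?thesis
    unfolding orthogonal_squares_def card_N by simp
qed

lemma orthogonal_squares_imp_differ:
  assumes "orthogonal_squares n L M" "n \<ge> 2"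
  shows "\<exists>i<n. \<exists>j<n. L i j \<noteq> M i j"
proof -
  have "card {(i, j). i < n \<and> j < n \<and> L i j = 1 \<and> M i j = 0} = n\<^sup>2 div 4"
    using assms(1) by (simp add: orthogonal_squares_def)
  moreover have "n\<^sup>2 div 4 > 0"
    using assms(2) power_mono[of 2 n 2] by simp
  ultimately have "{(i, j). i < n \<and> j < n \<and> L i j = 1 \<and> M i j = 0} \<noteq> {}"
    by (metis card.empty less_irrefl)
  then show ?thesis
    by force
qed

section \<open>The group Z_2 x Z_p\<close>

definition grp :: "int \<Rightarrow> (int \<times> int) set" where
  "grp p = {0..<2} \<times> {0..<p}"

definition grp_add :: "int \<Rightarrow> int \<times> int \<Rightarrow> int \<times> int \<Rightarrow> int \<times> int" where
  "grp_add p g h = ((fst g + fst h) mod 2, (snd g + snd h) mod p)"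

definition grp_diff :: "int \<Rightarrow> int \<times> int \<Rightarrow> int \<times> int \<Rightarrow> int \<times> int" where
  "grp_diff p g h = ((fst g - fst h) mod 2, (snd g - snd h) mod p)"

lemma finite_grp [simp]: "finite (grp p)"
  by (simp add: grp_def)

lemma grp_add_closed: "p > 0 \<Longrightarrow> grp_add p g h \<in> grp p"
  by (simp add: grp_add_def grp_def)

lemma grp_add_commute: "grp_add p g h = grp_add p h g"
  by (simp add: grp_add_def add.commute)

lemma grp_add_diff_cancel: "h \<in> grp p \<Longrightarrow> grp_add p c (grp_diff p h c) = h"
  by (auto simp: grp_add_def grp_diff_def grp_def mod_simps)

lemma grp_diff_add_cancel: "h \<in> grp p \<Longrightarrow> grp_diff p (grp_add p c h) c = h"
  by (auto simp: grp_add_def grp_diff_def grp_def mod_simps)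

lemma grp_add_diff_shift: "grp_add p (grp_add p c h) (grp_diff p c' c) = grp_add p c' h"
proof -
  have "((a + b) mod m + (a' - a) mod m) mod m = (a' + b) mod m" for a b a' m :: int
    unfolding mod_add_eq by (simp add: ac_simps)
  then show ?thesis
    by (simp add: grp_add_def grp_diff_def)
qed

lemma bij_betw_grp_add:
  assumes "p > 0"
  shows "bij_betw (grp_add p c) (grp p) (grp p)"
proof (rule bij_betw_byWitness[where f' = "\<lambda>h. grp_diff p h c"])
  have "grp_diff p h c \<in> grp p" for h
    using assms by (simp add: grp_diff_def grp_def)
  then show "(\<lambda>h. grp_diff p h c) ` grp p \<subseteq> grp p"
    by blast
  show "grp_add p c ` grp p \<subseteq> grp p"
    using assms grp_add_closed by blast
qed (simp_all add: grp_add_diff_cancel grp_diff_add_cancel)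

lemma sum_grp_add_shift:
  assumes "p > 0"
  shows "(\<Sum>h\<in>grp p. f (grp_add p c h)) = (\<Sum>h\<in>grp p. f h)"
  using sum.reindex_bij_betw[OF bij_betw_grp_add[OF assms]] .

lemma sum_grp: "(\<Sum>g\<in>grp p. f g) = (\<Sum>x\<in>{0..<p}. f (0, x)) + (\<Sum>x\<in>{0..<p}. f (1, x))"
proof -
  have "grp p = {0, 1} \<times> {0..<p}"
    by (auto simp: grp_def)
  then show ?thesis
    by (simp add: sum.cartesian_product')
qed

section \<open>Autocorrelation\<close>

definition autocorr :: "int \<Rightarrow> (int \<times> int \<Rightarrow> 'a::comm_semiring_1) \<Rightarrow> int \<times> int \<Rightarrow> 'a" where
  "autocorr p f e = (\<Sum>u\<in>grp p. f u * f (grp_add p u e))"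

lemma sum_mult_translates:
  assumes "p > 0"
  shows "(\<Sum>h\<in>grp p. f (grp_add p c h) * f (grp_add p c' h)) = autocorr p f (grp_diff p c' c)"
  using sum_grp_add_shift[OF assms, of "\<lambda>u. f u * f (grp_add p u (grp_diff p c' c))" c]
  by (simp add: autocorr_def grp_add_diff_shift)

lemma sum_autocorr:
  assumes "p > 0"
  shows "(\<Sum>e\<in>grp p. autocorr p f e) = (\<Sum>g\<in>grp p. f g)\<^sup>2"
proof -
  have "(\<Sum>e\<in>grp p. autocorr p f e) = (\<Sum>u\<in>grp p. f u * (\<Sum>e\<in>grp p. f (grp_add p u e)))"
    unfolding autocorr_def by (subst sum.swap) (simp add: sum_distrib_left)
  also have "\<dots> = (\<Sum>u\<in>grp p. f u * (\<Sum>g\<in>grp p. f g))"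
    by (simp add: sum_grp_add_shift[OF assms])
  finally show ?thesis
    by (simp add: power2_eq_square sum_distrib_right)
qed

definition base_set :: "int \<Rightarrow> (int \<times> int) set" where
  "base_set p = {0} \<times> {0..p div 2} \<union> {1} \<times> {1..p div 2}"

definition base_ind :: "int \<Rightarrow> int \<times> int \<Rightarrow> nat" where
  "base_ind p g = of_bool (g \<in> base_set p)"

lemma sum_base_ind:
  assumes "odd p" "p > 0"
  shows "(\<Sum>g\<in>grp p. base_ind p g) = nat p"
proof -
  have "base_set p \<subseteq> grp p"
    using assms by (auto simp: base_set_def grp_def)
  then have "(\<Sum>g\<in>grp p. base_ind p g) = card (base_set p)"
    by (simp add: base_ind_def Int_absorb1)
  also have "\<dots> = nat (p div 2 + 1) + nat (p div 2)"
    unfolding base_set_def by (subst card_Un_disjoint) (auto simp: card_cartesian_product)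
  also have "\<dots> = nat p"
    using assms by (auto elim!: oddE)
  finally show ?thesis .
qed

lemma autocorr_base_ind_fst_swap:
  assumes "0 < d" "d < p"
  shows "autocorr p (base_ind p) (1, d) = autocorr p (base_ind p) (0, d)"
proof -
  define y where "y x = (x + d) mod p" for x
  let ?\<chi> = "\<lambda>a x. base_ind p (a, x)"
  have split: "?\<chi> 0 x = ?\<chi> 1 x + of_bool (x = 0)" for x
    using assms by (simp add: base_ind_def base_set_def)
  have "?\<chi> 0 x * ?\<chi> 0 (y x) + ?\<chi> 1 x * ?\<chi> 1 (y x) = ?\<chi> 0 x * ?\<chi> 1 (y x) + ?\<chi> 1 x * ?\<chi> 0 (y x)"
    if "0 \<le> x" "x < p" for x
  proof -
    \<comment> \<open>the two sides differ by the product of the indicators of x = 0 and y x = 0\<close>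
    have "of_bool (x = 0) * of_bool (y x = 0) = (0::nat)"
      using assms that by (auto simp: y_def)
    then show ?thesis
      unfolding split by (simp add: algebra_simps)
  qed
  then show ?thesis
    unfolding autocorr_def sum_grp by (simp add: grp_add_def y_def[symmetric] sum.distrib[symmetric])
qed

section \<open>The twisted permutations\<close>

lemma coprime_if_abs_less_prime:
  fixes c p :: int
  assumes "prime p" "c \<noteq> 0" "\<bar>c\<bar> < p"
  shows "coprime c p"
proof -
  have "\<not> p dvd c"
    using dvd_imp_le_int[OF assms(2)] assms(3) by fastforce
  then show ?thesis
    using prime_imp_coprime[OF assms(1)] coprime_commute by blast
qed

lemma bij_betw_affine_mod:
  fixes p c d :: int
  assumes "p > 0" "coprime c p"
  shows "bij_betw (\<lambda>x. (c * x + d) mod p) {0..<p} {0..<p}"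
proof -
  have "inj_on (\<lambda>x. (c * x + d) mod p) {0..<p}"
  proof (rule inj_onI)
    fix x y
    assume "x \<in> {0..<p}" "y \<in> {0..<p}" and "(c * x + d) mod p = (c * y + d) mod p"
    then have "[x = y] (mod p)" and "0 \<le> x" "x < p" "0 \<le> y" "y < p"
      using cong_mult_lcancel[OF assms(2)] by (auto simp: cong_def[symmetric] cong_add_rcancel)
    then show "x = y"
      using cong_less_imp_eq_int by blast
  qed
  moreover have "(\<lambda>x. (c * x + d) mod p) ` {0..<p} \<subseteq> {0..<p}"
    using assms(1) by auto
  ultimately show ?thesis
    by (simp add: bij_betw_def endo_inj_surj)
qed

definition twist_bit :: "int \<Rightarrow> int \<Rightarrow> int \<Rightarrow> int" where
  "twist_bit p k y = of_bool (\<exists>l. k < l \<and> l < p \<and> p dvd k * l + y)"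

definition twist_snd :: "int \<Rightarrow> int \<Rightarrow> int \<times> int \<Rightarrow> int" where
  "twist_snd p k g = (k * snd g + fst g * k\<^sup>2) mod p"

definition twist :: "int \<Rightarrow> int \<Rightarrow> int \<times> int \<Rightarrow> int \<times> int" where
  "twist p k g = ((fst g + twist_bit p k (twist_snd p k g)) mod 2, twist_snd p k g)"

lemma twist_bit_eq:
  assumes "prime p" "0 < k" "k < p" "0 \<le> l" "l < p"
  shows "twist_bit p k (- (k * l) mod p) = of_bool (k < l)"
proof -
  have cop: "coprime k p"
    using coprime_if_abs_less_prime assms(1-3) by simp
  have "p dvd k * l' + - (k * l) mod p \<longleftrightarrow> l' = l" if "0 \<le> l'" "l' < p" for l'
  proof -
    have "p dvd k * l' + - (k * l) mod p \<longleftrightarrow> [k * l' = k * l] (mod p)"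
      by (simp add: cong_iff_dvd_diff dvd_eq_mod_eq_0 mod_add_right_eq)
    also have "\<dots> \<longleftrightarrow> [l' = l] (mod p)"
      by (rule cong_mult_lcancel[OF cop])
    also have "\<dots> \<longleftrightarrow> l' = l"
      using cong_less_imp_eq_int[of l' p l] that assms(4,5) by auto
    finally show ?thesis .
  qed
  then show ?thesis
    unfolding twist_bit_def using assms(2,5) by (auto intro!: arg_cong[where f = of_bool])
qed

lemma twist_in_grp: "p > 0 \<Longrightarrow> twist p k g \<in> grp p"
  by (simp add: twist_def twist_snd_def grp_def)

lemma bij_betw_twist_snd:
  assumes "prime p" "0 < k" "k < p"
  shows "bij_betw (\<lambda>x. twist_snd p k (a, x)) {0..<p} {0..<p}"
  using bij_betw_affine_mod[of p k "a * k\<^sup>2"] coprime_if_abs_less_prime[of p k] assms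
  by (simp add: twist_snd_def)

lemma bij_betw_twist:
  assumes "prime p" "0 < k" "k < p"
  shows "bij_betw (twist p k) (grp p) (grp p)"
proof -
  have "inj_on (twist p k) (grp p)"
  proof (rule inj_onI)
    fix g h
    assume "g \<in> grp p" "h \<in> grp p" and eq: "twist p k g = twist p k h"
    then obtain a x b y where g: "g = (a, x)" and h: "h = (b, y)"
      and range: "a \<in> {0..<2}" "b \<in> {0..<2}" "x \<in> {0..<p}" "y \<in> {0..<p}"
      by (auto simp: grp_def)
    define t where "t = twist_bit p k (twist_snd p k g)"
    have snd_eq: "twist_snd p k (a, x) = twist_snd p k (b, y)"
      using eq g h by (simp add: twist_def)
    then have "(a + t) mod 2 = (b + t) mod 2"
      using eq g h by (simp add: twist_def t_def)
    then have "a = b"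
      using range cong_less_imp_eq_int[of a 2 b] by (auto simp: cong_def[symmetric] cong_add_rcancel)
    moreover have "x = y"
      using snd_eq \<open>a = b\<close> range bij_betw_twist_snd[OF assms, of b]
      by (auto simp: bij_betw_def inj_on_def)
    ultimately show "g = h"
      using g h by simp
  qed
  moreover have "twist p k ` grp p \<subseteq> grp p"
    using twist_in_grp assms(2,3) by auto
  ultimately show ?thesis
    by (simp add: bij_betw_def endo_inj_surj)
qed

definition twist_diff :: "int \<Rightarrow> int \<Rightarrow> int \<Rightarrow> int \<times> int \<Rightarrow> int \<times> int" where
  "twist_diff p k l g = grp_diff p (twist p l g) (twist p k g)"

lemma snd_twist_diff:
  "snd (twist_diff p k l (a, x)) = ((l - k) * x + (l - k) * a * (l + k)) mod p"
proof -
  have "l * x + a * l\<^sup>2 - (k * x + a * k\<^sup>2) = (l - k) * x + (l - k) * a * (l + k)"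
    by (simp add: power2_eq_square algebra_simps)
  then show ?thesis
    by (simp add: twist_diff_def grp_diff_def twist_def twist_snd_def mod_diff_eq)
qed

lemma bij_betw_snd_twist_diff:
  assumes "prime p" "0 < k" "k < p" "0 < l" "l < p" "k \<noteq> l"
  shows "bij_betw (\<lambda>x. snd (twist_diff p k l (a, x))) {0..<p} {0..<p}"
  using bij_betw_affine_mod[of p "l - k" "(l - k) * a * (l + k)"]
    coprime_if_abs_less_prime[of p "l - k"] assms
  by (simp add: snd_twist_diff)

lemma twist_snd_eq_at_root:
  assumes "p dvd x + a * (k + l)"
  shows "twist_snd p k (a, x) = - (k * (a * l)) mod p"
proof -
  from assms obtain m where "x + a * (k + l) = p * m"
    by (rule dvdE)
  then have x: "x = p * m - a * (k + l)"
    by simp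
  have "k * x + a * k\<^sup>2 = - (k * (a * l)) + p * (k * m)"
    unfolding x by (simp add: power2_eq_square algebra_simps)
  then show ?thesis
    by (simp add: twist_snd_def mod_eq_dvd_iff)
qed

lemma twist_diff_at_snd_zero:
  assumes "prime p" "0 < k" "k < p" "0 < l" "l < p" "k \<noteq> l" "a \<in> {0, 1}"
    and zero: "snd (twist_diff p k l (a, x)) = 0"
  shows "twist_diff p k l (a, x) = (a, 0)"
proof -
  have "coprime p (l - k)"
    using coprime_if_abs_less_prime[of p "l - k"] assms(1-6) by (simp add: coprime_commute)
  moreover have "p dvd (l - k) * (x + a * (k + l))"
    using zero by (simp add: snd_twist_diff dvd_eq_mod_eq_0 algebra_simps)
  ultimately have root: "p dvd x + a * (k + l)"
    using coprime_dvd_mult_right_iff by blast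
  have snd_k: "twist_snd p k (a, x) = - (k * (a * l)) mod p"
    using twist_snd_eq_at_root[OF root] .
  have snd_l: "twist_snd p l (a, x) = - (l * (a * k)) mod p"
    using twist_snd_eq_at_root[of p x a l k] root by (simp add: add.commute)
  have bit_k: "twist_bit p k (twist_snd p k (a, x)) = of_bool (k < a * l)"
    unfolding snd_k using assms(4,5,7) by (intro twist_bit_eq[OF assms(1-3)]) auto
  have bit_l: "twist_bit p l (twist_snd p l (a, x)) = of_bool (l < a * k)"
    unfolding snd_l using assms(2,3,7) by (intro twist_bit_eq[OF assms(1,4,5)]) auto
  have "((a + of_bool (l < a * k)) mod 2 - (a + of_bool (k < a * l)) mod 2) mod 2 = a"
    using assms(2,4,6,7) by auto
  then show ?thesis
    using zero bit_k bit_l by (simp add: prod_eq_iff twist_diff_def grp_diff_def twist_def)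
qed

lemma sum_autocorr_twist_diff:
  assumes "prime p" "0 < k" "k < p" "0 < l" "l < p" "k \<noteq> l"
  shows "(\<Sum>g\<in>grp p. autocorr p (base_ind p) (twist_diff p k l g))
       = (\<Sum>g\<in>grp p. autocorr p (base_ind p) g)"
proof -
  let ?A = "autocorr p (base_ind p)"
  have "(\<Sum>x\<in>{0..<p}. ?A (twist_diff p k l (a, x))) = (\<Sum>x\<in>{0..<p}. ?A (a, x))"
    if a: "a \<in> {0, 1}" for a
  proof -
    let ?z = "\<lambda>x. snd (twist_diff p k l (a, x))"
    have "?A (twist_diff p k l (a, x)) = ?A (a, ?z x)" for x
    proof (cases "?z x = 0")
      case True
      then show ?thesis
        using twist_diff_at_snd_zero[OF assms a] by simp
    next
      case False
      define b where "b = fst (twist_diff p k l (a, x))"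
      have "twist_diff p k l (a, x) \<in> grp p"
        using assms(2,3) by (simp add: twist_diff_def grp_diff_def grp_def)
      then have "twist_diff p k l (a, x) = (b, ?z x)" "b \<in> {0, 1}" "0 \<le> ?z x" "?z x < p"
        by (auto simp: grp_def b_def)
      then show ?thesis
        using False a autocorr_base_ind_fst_swap[of "?z x" p] by auto
    qed
    then have "(\<Sum>x\<in>{0..<p}. ?A (twist_diff p k l (a, x))) = (\<Sum>x\<in>{0..<p}. ?A (a, ?z x))"
      by simp
    also have "\<dots> = (\<Sum>x\<in>{0..<p}. ?A (a, x))"
      using sum.reindex_bij_betw[OF bij_betw_snd_twist_diff[OF assms]] .
    finally show ?thesis .
  qed
  then show ?thesis
    unfolding sum_grp by simp
qed

definition enc :: "nat \<Rightarrow> nat \<Rightarrow> int \<times> int" where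
  "enc p i = (int (i div p), int (i mod p))"

lemma bij_betw_enc:
  assumes "p > 0"
  shows "bij_betw (enc p) {..<2 * p} (grp (int p))"
proof (rule bij_betw_byWitness[where f' = "\<lambda>g. nat (fst g) * p + nat (snd g)"])
  show "\<forall>i\<in>{..<2 * p}. nat (fst (enc p i)) * p + nat (snd (enc p i)) = i"
    by (simp add: enc_def)
  show "\<forall>g\<in>grp (int p). enc p (nat (fst g) * p + nat (snd g)) = g"
    using assms by (auto simp: enc_def grp_def)
  show "enc p ` {..<2 * p} \<subseteq> grp (int p)"
    using assms by (auto simp: enc_def grp_def less_mult_imp_div_less)
  have "a * p + x < 2 * p" if "a < 2" "x < p" for a x
    using that by (cases a) auto
  then show "(\<lambda>g. nat (fst g) * p + nat (snd g)) ` grp (int p) \<subseteq> {..<2 * p}"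
    by (auto simp: grp_def)
qed

lemma sum_enc:
  assumes "p > 0"
  shows "(\<Sum>i<2 * p. f (enc p i)) = (\<Sum>g\<in>grp (int p). f g)"
  by (rule sum.reindex_bij_betw[OF bij_betw_enc[OF assms]])

definition mofs_square :: "nat \<Rightarrow> nat \<Rightarrow> nat \<Rightarrow> nat \<Rightarrow> nat" where
  "mofs_square p k i j = base_ind (int p) (grp_add (int p) (twist (int p) (int k) (enc p i)) (enc p j))"

lemma mofs_square_row_sum:
  assumes "odd p"
  shows "(\<Sum>j<2 * p. mofs_square p k i j) = p"
proof -
  have p: "p > 0" "int p > 0"
    using assms by (auto intro: odd_pos)
  let ?c = "twist (int p) (int k) (enc p i)"
  have "(\<Sum>j<2 * p. mofs_square p k i j) = (\<Sum>h\<in>grp (int p). base_ind (int p) (grp_add (int p) ?c h))"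
    unfolding mofs_square_def by (rule sum_enc[OF p(1)])
  also have "\<dots> = (\<Sum>h\<in>grp (int p). base_ind (int p) h)"
    by (rule sum_grp_add_shift[OF p(2)])
  also have "\<dots> = p"
    using sum_base_ind[of "int p"] assms p by simp
  finally show ?thesis .
qed

lemma mofs_square_col_sum:
  assumes "prime p" "odd p" "0 < k" "k < p"
  shows "(\<Sum>i<2 * p. mofs_square p k i j) = p"
proof -
  have p: "p > 0" "int p > 0"
    using assms by auto
  let ?h = "enc p j"
  have "(\<Sum>i<2 * p. mofs_square p k i j)
      = (\<Sum>g\<in>grp (int p). base_ind (int p) (grp_add (int p) (twist (int p) (int k) g) ?h))"
    unfolding mofs_square_def by (rule sum_enc[OF p(1)])
  also have "\<dots> = (\<Sum>g\<in>grp (int p). base_ind (int p) (grp_add (int p) g ?h))"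
    by (rule sum.reindex_bij_betw[OF bij_betw_twist]) (use assms in auto)
  also have "\<dots> = (\<Sum>g\<in>grp (int p). base_ind (int p) (grp_add (int p) ?h g))"
    by (simp only: grp_add_commute)
  also have "\<dots> = (\<Sum>g\<in>grp (int p). base_ind (int p) g)"
    by (rule sum_grp_add_shift[OF p(2)])
  also have "\<dots> = p"
    using sum_base_ind[of "int p"] assms p by simp
  finally show ?thesis .
qed

lemma mofs_square_mult_sum:
  assumes "prime p" "odd p" "0 < k" "k < p" "0 < l" "l < p" "k \<noteq> l"
  shows "(\<Sum>i<2 * p. \<Sum>j<2 * p. mofs_square p k i j * mofs_square p l i j) = p * p"
proof -
  have p: "p > 0" "int p > 0"
    using assms by auto
  let ?A = "autocorr (int p) (base_ind (int p))"
  have "(\<Sum>j<2 * p. mofs_square p k i j * mofs_square p l i j)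
      = ?A (twist_diff (int p) (int k) (int l) (enc p i))" for i
  proof -
    let ?c = "twist (int p) (int k) (enc p i)" and ?c' = "twist (int p) (int l) (enc p i)"
    have "(\<Sum>j<2 * p. mofs_square p k i j * mofs_square p l i j)
        = (\<Sum>h\<in>grp (int p). base_ind (int p) (grp_add (int p) ?c h) * base_ind (int p) (grp_add (int p) ?c' h))"
      unfolding mofs_square_def by (rule sum_enc[OF p(1)])
    also have "\<dots> = ?A (grp_diff (int p) ?c' ?c)"
      by (rule sum_mult_translates[OF p(2)])
    finally show ?thesis
      by (simp add: twist_diff_def)
  qed
  then have "(\<Sum>i<2 * p. \<Sum>j<2 * p. mofs_square p k i j * mofs_square p l i j)
      = (\<Sum>i<2 * p. ?A (twist_diff (int p) (int k) (int l) (enc p i)))"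
    by simp
  also have "\<dots> = (\<Sum>g\<in>grp (int p). ?A (twist_diff (int p) (int k) (int l) g))"
    by (rule sum_enc[OF p(1)])
  also have "\<dots> = (\<Sum>g\<in>grp (int p). ?A g)"
    by (rule sum_autocorr_twist_diff) (use assms in auto)
  also have "\<dots> = p * p"
    using sum_autocorr[OF p(2), of "base_ind (int p)"] sum_base_ind[of "int p"] assms p by (simp add: power2_eq_square)
  finally show ?thesis .
qed

theorem mainTheorem14:
  fixes p :: nat
  assumes "prime p" and "p \<ge> 3"
  shows "\<exists>F. MOFS_binary (2 * p) (p - 1) F"
proof -
  have odd: "odd p"
    using prime_odd_nat assms by auto
  define F where "F r = mofs_square p (Suc r)" for r
  have bin: "F r i j \<in> {0, 1}" for r i j
    by (simp add: F_def mofs_square_def base_ind_def)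
  have rows: "(\<Sum>j<2 * p. F r i j) = p" for r i
    unfolding F_def by (rule mofs_square_row_sum[OF odd])
  have cols: "(\<Sum>i<2 * p. F r i j) = p" if "r < p - 1" for r j
    unfolding F_def using that by (intro mofs_square_col_sum[OF assms(1) odd]) auto
  have "binary_freq_square (2 * p) (F r)" if "r < p - 1" for r
    using bin rows cols[OF that] by (intro binary_freq_squareI) auto
  moreover have "orthogonal_squares (2 * p) (F r) (F s)" if "r < p - 1" "s < p - 1" "r \<noteq> s" for r s
  proof (rule orthogonal_squaresI[where q = "p * p"])
    show "(\<Sum>i<2 * p. \<Sum>j<2 * p. F r i j) = 2 * (p * p)" "(\<Sum>i<2 * p. \<Sum>j<2 * p. F s i j) = 2 * (p * p)"
      by (simp_all add: rows)
    show "(\<Sum>i<2 * p. \<Sum>j<2 * p. F r i j * F s i j) = p * p"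
      unfolding F_def using that by (intro mofs_square_mult_sum[OF assms(1) odd]) auto
  qed (rule bin | simp)+
  moreover have "2 * p \<ge> 2"
    using assms(2) by simp
  ultimately show ?thesis
    unfolding MOFS_binary_def by (blast intro: orthogonal_squares_imp_differ)
qed

end
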